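(* Let $\mathcal{P}\subseteq\mathbb{Z}_{\geq0}$ with $0\in\mathcal{P}$, working with formal power series over a commutative ring $R\supseteq\mathbb{Q}$. Then $F^{\mathcal{P}}(z)=z\frac{\partial}{\partial z}\ln T^\mathcal{P}(z)$, i.e. $F^\mathcal{P}(z)=z\,\frac{\partial}{\partial z}T^\mathcal{P}(z)\big/T^\mathcal{P}(z)$, and for every $n\ge0$, $$[z^n]\,F^\mathcal{P}(z) = [z^n]\,e_\mathcal{P}(z)^n.$$
   Context: $[n]=\{1,\dots,n\}$; $[z^n]g$ is the coefficient of $z^n$. $e_\mathcal{P}(z)=\sum_{n\in\mathcal{P}}z^n/n!$. $T^\mathcal{P}(z)=\sum_t z^{|t|}/|t|!$ over labeled rooted trees $t$ (trees on vertex set $[|t|]$ with a distinguished root) in which every vertex has a number of children (neighbours farther from the root) in $\mathcal{P}$; since $0\in\mathcal{P}$, $T^\mathcal{P}(z)=z\cdot(\text{invertible series})$, so the quotient is a formal (Laurent) power series. $F^\mathcal{P}(z)=\sum_{n\ge0}c_nz^n/n!$ where $c_n$ is the number of functions $f:[n]\to[n]$ with $|f^{-1}(x)|\in\mathcal{P}$ for all $x\in[n]$ ($c_0=1$). *)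

theory Defs
  imports "HOL-Computational_Algebra.Formal_Power_Series" "HOL-Library.FuncSet"
begin

text \<open>A labeled rooted tree on vertex set [n] = {1..n} is encoded by its parent map:
  the root r is the unique fixed point, every other vertex x is sent to its parent p x,
  and iterating p from any vertex reaches the root (so there are no cycles).\<close>

definition rooted_tree :: "nat \<Rightarrow> (nat \<Rightarrow> nat) \<Rightarrow> bool" where
  "rooted_tree n p \<longleftrightarrow> p \<in> {1..n} \<rightarrow>\<^sub>E {1..n} \<and>
     (\<exists>r\<in>{1..n}. p r = r \<and> (\<forall>x\<in>{1..n}. \<exists>k. (p ^^ k) x = r))"

definition children :: "nat \<Rightarrow> (nat \<Rightarrow> nat) \<Rightarrow> nat \<Rightarrow> nat set" where
  "children n p x = {y \<in> {1..n}. y \<noteq> x \<and> p y = x}"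

definition P_trees :: "nat set \<Rightarrow> nat \<Rightarrow> (nat \<Rightarrow> nat) set" where
  "P_trees P n = {p. rooted_tree n p \<and> (\<forall>x\<in>{1..n}. card (children n p x) \<in> P)}"

definition T_P :: "nat set \<Rightarrow> 'a::field_char_0 fps" where
  "T_P P = Abs_fps (\<lambda>n. of_nat (card (P_trees P n)) / fact n)"

definition P_functions :: "nat set \<Rightarrow> nat \<Rightarrow> (nat \<Rightarrow> nat) set" where
  "P_functions P n = {f \<in> {1..n} \<rightarrow>\<^sub>E {1..n}. \<forall>x\<in>{1..n}. card (f -` {x} \<inter> {1..n}) \<in> P}"

definition F_P :: "nat set \<Rightarrow> 'a::field_char_0 fps" where
  "F_P P = Abs_fps (\<lambda>n. of_nat (card (P_functions P n)) / fact n)"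

definition e_P :: "nat set \<Rightarrow> 'a::field_char_0 fps" where
  "e_P P = Abs_fps (\<lambda>n. if n \<in> P then 1 / fact n else 0)"

end

theory Submission
  imports Defs
begin

text \<open>Maps \<open>g : C \<rightarrow> R\<close> whose fibres all have sizes in \<open>P\<close> are counted by
  \<open>|C|! [z\<^bsup>|C|\<^esup>] e\<^sub>P(z)\<^bsup>|R|\<^esup>\<close>; for \<open>C = R = [n]\<close> these are the functions counted by \<open>F\<^sup>P\<close>.
  Deleting the root set \<open>R\<close> of a forest on \<open>W\<close> (all child counts in \<open>P\<close>) leaves such a forest on
  \<open>W - R\<close> rooted at the first level \<open>C\<close>, plus such a map \<open>C \<rightarrow> R\<close>. By induction, the forests are
  therefore counted by \<open>|W - R|! [z\<^bsup>|W|\<^esup>] T(z)\<^bsup>|R|\<^esup>\<close> for any solution of \<open>T = z e\<^sub>P(T)\<close>, so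
  \<open>T\<^sup>P\<close> is that solution. Lagrange inversion in the form \<open>[z\<^sup>n] z T'/T = [z\<^sup>n] \<phi>\<^sup>n\<close> for
  \<open>T = z \<phi>(T)\<close> finishes the proof.\<close>

unbundle fps_syntax

section \<open>Lagrange inversion for the logarithmic derivative\<close>

lemma fps_compose_X_mult_inverse_eq_X_iff:
  fixes \<phi> T :: "'a::field fps"
  assumes "\<phi> $ 0 \<noteq> 0" "T $ 0 = 0"
  shows "(fps_X * inverse \<phi>) oo T = fps_X \<longleftrightarrow> T = fps_X * (\<phi> oo T)"
proof -
  have unit: "inverse (\<phi> oo T) * (\<phi> oo T) = 1"
    using assms(1) by (simp add: inverse_mult_eq_1)
  have "(fps_X * inverse \<phi>) oo T = T * inverse (\<phi> oo T)"
    using assms by (simp add: fps_compose_mult_distrib fps_inverse_compose)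
  moreover have "T * inverse (\<phi> oo T) = fps_X \<longleftrightarrow> T = fps_X * (\<phi> oo T)"
  proof
    assume "T * inverse (\<phi> oo T) = fps_X"
    then have "T * (inverse (\<phi> oo T) * (\<phi> oo T)) = fps_X * (\<phi> oo T)"
      by (simp only: mult.assoc[symmetric])
    then show "T = fps_X * (\<phi> oo T)" by (simp only: unit mult_1_right)
  next
    assume "T = fps_X * (\<phi> oo T)"
    then have "T * inverse (\<phi> oo T) = fps_X * (\<phi> oo T) * inverse (\<phi> oo T)"
      by (rule arg_cong[where f = "\<lambda>S. S * inverse (\<phi> oo T)"])
    then show "T * inverse (\<phi> oo T) = fps_X"
      by (simp only: mult.assoc mult.commute[of "\<phi> oo T"] unit mult_1_right)
  qed
  ultimately show ?thesis by simp
qed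

lemma fps_inv_X_mult_inverse_functional_eq:
  fixes \<phi> :: "'a::field fps"
  assumes "\<phi> $ 0 \<noteq> 0"
  defines "T \<equiv> fps_inv (fps_X * inverse \<phi>)"
  shows "T = fps_X * (\<phi> oo T)"
proof -
  have "T $ 0 = 0" by (simp add: T_def fps_inv_def)
  moreover have "(fps_X * inverse \<phi>) oo T = fps_X"
    unfolding T_def using assms(1) by (intro fps_inv_right) simp_all
  ultimately show ?thesis using fps_compose_X_mult_inverse_eq_X_iff[OF assms(1)] by blast
qed

lemma functional_eq_compose_X_mult_inverse:
  fixes \<phi> T :: "'a::field fps"
  assumes "\<phi> $ 0 \<noteq> 0" and T: "T = fps_X * (\<phi> oo T)"
  shows "T oo (fps_X * inverse \<phi>) = fps_X"
proof -
  let ?\<psi> = "fps_X * inverse \<phi>"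
  have T0: "T $ 0 = 0" by (subst T) simp
  have T1: "T $ 1 \<noteq> 0" using assms(1) by (subst T) simp
  have "?\<psi> oo T = fps_X" using fps_compose_X_mult_inverse_eq_X_iff assms T0 by blast
  then have "(T oo ?\<psi>) oo T = fps_X oo T"
    using T0 by (simp add: fps_compose_assoc[symmetric])
  then show ?thesis using fps_compose_inj_right[OF T0 T1] by simp
qed

lemma power_Suc_mult_deriv_X_mult_inverse_nth:
  fixes \<phi> :: "'a::field_char_0 fps"
  assumes "\<phi> $ 0 \<noteq> 0"
  shows "(\<phi> ^ Suc j * fps_deriv (fps_X * inverse \<phi>)) $ j = (if j = 0 then 1 else 0)"
proof -
  have unit: "\<phi> * inverse \<phi> = 1" using assms by (simp add: inverse_mult_eq_1')
  have deriv: "fps_deriv (fps_X * inverse \<phi>) = inverse \<phi> - fps_X * fps_deriv \<phi> * inverse \<phi> * inverse \<phi>"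
    using assms by (simp add: fps_inverse_deriv power2_eq_square algebra_simps)
  have "\<phi> ^ Suc j * fps_deriv (fps_X * inverse \<phi>) =
      \<phi> ^ j * (\<phi> * inverse \<phi>) - fps_X * (fps_deriv \<phi> * \<phi> ^ j * inverse \<phi>) * (\<phi> * inverse \<phi>)"
    unfolding deriv by (simp add: algebra_simps)
  then have expand: "\<phi> ^ Suc j * fps_deriv (fps_X * inverse \<phi>) =
      \<phi> ^ j - fps_X * (fps_deriv \<phi> * \<phi> ^ j * inverse \<phi>)"
    by (simp only: unit mult_1_right)
  show ?thesis
  proof (cases j)
    case 0
    then show ?thesis using assms by (simp add: expand)
  next
    case (Suc i)
    have "fps_deriv \<phi> * \<phi> ^ j * inverse \<phi> = fps_deriv \<phi> * \<phi> ^ i * (\<phi> * inverse \<phi>)"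
      by (simp only: Suc power_Suc2 mult.assoc)
    then have cancel: "fps_deriv \<phi> * \<phi> ^ j * inverse \<phi> = fps_deriv \<phi> * \<phi> ^ i"
      by (simp only: unit mult_1_right)
    have "fps_deriv (\<phi> ^ Suc i) = fps_const (of_nat (Suc i)) * (fps_deriv \<phi> * \<phi> ^ i)"
      by (simp only: fps_deriv_power diff_Suc_1 mult.assoc)
    then have "of_nat (Suc i) * (fps_deriv \<phi> * \<phi> ^ i) $ i = of_nat (Suc i) * (\<phi> ^ Suc i) $ Suc i"
      by (metis fps_deriv_nth fps_mult_left_const_nth Suc_eq_plus1)
    then have "(fps_deriv \<phi> * \<phi> ^ i) $ i = (\<phi> ^ Suc i) $ Suc i"
      by (simp only: mult_cancel_left of_nat_eq_0_iff nat.distinct simp_thms)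
    then show ?thesis
      unfolding expand cancel using Suc by (simp add: fps_X_mult_nth del: power_Suc)
  qed
qed

lemma fps_compose_mult_nth:
  fixes A \<psi> Q :: "'a::comm_ring_1 fps"
  assumes "\<psi> $ 0 = 0"
  shows "((A oo \<psi>) * Q) $ n = (\<Sum>m=0..n. A $ m * (\<psi> ^ m * Q) $ n)"
proof -
  have truncate: "(A oo \<psi>) $ i = (\<Sum>m=0..n. A $ m * (\<psi> ^ m) $ i)" if "i \<le> n" for i
    unfolding fps_compose_nth using that assms
    by (intro sum.mono_neutral_left) (auto simp: startsby_zero_power_prefix)
  have "((A oo \<psi>) * Q) $ n = (\<Sum>i=0..n. \<Sum>m=0..n. A $ m * (\<psi> ^ m) $ i * Q $ (n - i))"
    by (simp add: fps_mult_nth truncate sum_distrib_right)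
  also have "\<dots> = (\<Sum>m=0..n. A $ m * (\<psi> ^ m * Q) $ n)"
    by (subst sum.swap) (simp add: fps_mult_nth sum_distrib_left mult.assoc)
  finally show ?thesis .
qed

lemma X_mult_inverse_power_mult_nth:
  fixes \<phi> :: "'a::field_char_0 fps"
  assumes \<phi>0: "\<phi> $ 0 \<noteq> 0" and m: "m \<le> n"
  shows "((fps_X * inverse \<phi>) ^ m * (\<phi> ^ Suc n * fps_deriv (fps_X * inverse \<phi>))) $ n =
    (if m = n then 1 else 0)"
proof -
  let ?\<psi> = "fps_X * inverse \<phi>"
  have "?\<psi> ^ m * \<phi> ^ Suc n = fps_X ^ m * (inverse \<phi> * \<phi>) ^ m * \<phi> ^ Suc (n - m)"
    using m by (simp add: power_mult_distrib ac_simps flip: power_add)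
  then have shift: "?\<psi> ^ m * (\<phi> ^ Suc n * fps_deriv ?\<psi>) = fps_X ^ m * (\<phi> ^ Suc (n - m) * fps_deriv ?\<psi>)"
    using \<phi>0 by (simp add: inverse_mult_eq_1 mult.assoc[symmetric])
  have "(?\<psi> ^ m * (\<phi> ^ Suc n * fps_deriv ?\<psi>)) $ n = (\<phi> ^ Suc (n - m) * fps_deriv ?\<psi>) $ (n - m)"
    unfolding shift using m by (simp add: fps_X_power_mult_nth del: power_Suc)
  also have "\<dots> = (if m = n then 1 else 0)"
    using power_Suc_mult_deriv_X_mult_inverse_nth[OF \<phi>0, of "n - m"] m by auto
  finally show ?thesis .
qed

lemma log_deriv_compose_X_mult_inverse:
  fixes \<phi> T :: "'a::field_char_0 fps"
  assumes \<phi>0: "\<phi> $ 0 \<noteq> 0" and T: "T = fps_X * (\<phi> oo T)"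
  defines "\<psi> \<equiv> fps_X * inverse \<phi>"
  shows "((fps_X * fps_deriv T / T) oo \<psi>) * fps_deriv \<psi> * \<phi> = 1"
proof -
  have \<psi>0: "\<psi> $ 0 = 0" by (simp add: \<psi>_def)
  have T0: "T $ 0 = 0" by (subst T) simp
  have G0: "(\<phi> oo T) $ 0 \<noteq> 0" using \<phi>0 by simp
  have "fps_X * fps_deriv T / T = (fps_deriv T * fps_X) / ((\<phi> oo T) * fps_X)"
    by (subst (2) T) (simp add: mult.commute)
  also have "\<dots> = fps_deriv T * inverse (\<phi> oo T)"
    using G0 by (simp add: fps_divide_cancel fps_divide_unit)
  finally have A: "fps_X * fps_deriv T / T = fps_deriv T * inverse (\<phi> oo T)" .
  have T\<psi>: "T oo \<psi> = fps_X"
    unfolding \<psi>_def using \<phi>0 T by (rule functional_eq_compose_X_mult_inverse)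
  have chain: "(fps_deriv T oo \<psi>) * fps_deriv \<psi> = 1"
    using fps_compose_deriv[OF \<psi>0, of T] T\<psi> by simp
  have "(\<phi> oo T) oo \<psi> = \<phi>"
    using T0 \<psi>0 T\<psi> by (simp add: fps_compose_assoc[symmetric])
  then have "inverse (\<phi> oo T) oo \<psi> = inverse \<phi>"
    using \<psi>0 G0 by (simp add: fps_inverse_compose)
  then have "(fps_X * fps_deriv T / T) oo \<psi> = (fps_deriv T oo \<psi>) * inverse \<phi>"
    unfolding A using \<psi>0 by (simp add: fps_compose_mult_distrib)
  then show ?thesis
    using chain \<phi>0 by (simp add: ac_simps inverse_mult_eq_1')
qed

text \<open>Since \<open>\<phi>\<^sup>n = (A \<circ> \<psi>) \<phi>\<^bsup>n+1\<^esup> \<psi>'\<close> for \<open>A = z T'/T\<close>, expanding the composition and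
  applying \<open>X_mult_inverse_power_mult_nth\<close> leaves only the term \<open>A\<^sub>n\<close> in the \<open>n\<close>-th coefficient.\<close>

theorem lagrange_inversion_log_deriv:
  fixes \<phi> T :: "'a::field_char_0 fps"
  assumes \<phi>0: "\<phi> $ 0 \<noteq> 0" and T: "T = fps_X * (\<phi> oo T)"
  shows "(fps_X * fps_deriv T / T) $ n = (\<phi> ^ n) $ n"
proof -
  define \<psi> where "\<psi> = fps_X * inverse \<phi>"
  define A where "A = fps_X * fps_deriv T / T"
  have "(A oo \<psi>) * fps_deriv \<psi> * \<phi> = 1"
    unfolding A_def \<psi>_def using \<phi>0 T by (rule log_deriv_compose_X_mult_inverse)
  then have "\<phi> ^ n = (A oo \<psi>) * (\<phi> ^ Suc n * fps_deriv \<psi>)"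
    by (metis (no_types, lifting) mult.assoc mult.commute mult_1 power_Suc)
  then have "(\<phi> ^ n) $ n = (\<Sum>m=0..n. A $ m * (\<psi> ^ m * (\<phi> ^ Suc n * fps_deriv \<psi>)) $ n)"
    by (simp add: fps_compose_mult_nth \<psi>_def del: power_Suc)
  also have "\<dots> = (\<Sum>m=0..n. if m = n then A $ m else 0)"
  proof (rule sum.cong[OF refl])
    fix m assume "m \<in> {0..n}"
    then have "(\<psi> ^ m * (\<phi> ^ Suc n * fps_deriv \<psi>)) $ n = (if m = n then 1 else 0)"
      unfolding \<psi>_def by (intro X_mult_inverse_power_mult_nth[OF \<phi>0]) simp
    then show "A $ m * (\<psi> ^ m * (\<phi> ^ Suc n * fps_deriv \<psi>)) $ n = (if m = n then A $ m else 0)"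
      by simp
  qed
  also have "\<dots> = A $ n" by simp
  finally show ?thesis by (simp add: A_def)
qed

section \<open>Maps with fibre sizes in \<open>P\<close>\<close>

lemma card_eq_sum_card_fibres:
  assumes "finite A" "finite K" "f ` A \<subseteq> K"
  shows "card A = (\<Sum>k\<in>K. card {x \<in> A. f x = k})"
  unfolding card_eq_sum by (rule sum.group[OF assms, symmetric])

lemma sum_Pow_fact_mult_fact:
  fixes f :: "nat \<Rightarrow> 'a::{comm_semiring_1,semiring_char_0}"
  assumes "finite A"
  shows "(\<Sum>S\<in>Pow A. fact (card S) * fact (card A - card S) * f (card S)) =
    fact (card A) * (\<Sum>j=0..card A. f j)"
proof -
  let ?c = "card A"
  have "(\<Sum>S\<in>Pow A. fact (card S) * fact (?c - card S) * f (card S)) =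
      (\<Sum>j=0..?c. \<Sum>S\<in>{S. S \<in> Pow A \<and> card S = j}. fact (card S) * fact (?c - card S) * f (card S))"
    by (rule sum.group[symmetric]) (use assms in \<open>auto intro: card_mono\<close>)
  also have "\<dots> = (\<Sum>j=0..?c. of_nat (?c choose j) * (fact j * fact (?c - j) * f j))"
    using n_subsets[OF assms] by (intro sum.cong) auto
  also have "\<dots> = (\<Sum>j=0..?c. fact ?c * f j)"
  proof (rule sum.cong[OF refl])
    fix j assume "j \<in> {0..?c}"
    then have "fact j * fact (?c - j) * of_nat (?c choose j) = (fact ?c :: 'a)"
      using binomial_fact_lemma[of j ?c] by (metis atLeastAtMost_iff of_nat_fact of_nat_mult)
    then show "of_nat (?c choose j) * (fact j * fact (?c - j) * f j) = fact ?c * f j"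
      by (metis mult.assoc mult.commute)
  qed
  finally show ?thesis by (simp add: sum_distrib_left)
qed

definition P_maps :: "nat set \<Rightarrow> 'a set \<Rightarrow> 'b set \<Rightarrow> ('a \<Rightarrow> 'b) set" where
  "P_maps P C R = {g \<in> C \<rightarrow>\<^sub>E R. \<forall>x\<in>R. card (g -` {x} \<inter> C) \<in> P}"

lemma finite_P_maps: "finite C \<Longrightarrow> finite R \<Longrightarrow> finite (P_maps P C R)"
  unfolding P_maps_def by (rule finite_subset[of _ "C \<rightarrow>\<^sub>E R"]) (auto intro: finite_PiE)

lemma P_maps_empty_target: "P_maps P C {} = (if C = {} then {\<lambda>_. undefined} else {})"
  by (auto simp: P_maps_def)

lemma card_P_maps_fibre:
  assumes "b \<notin> R" "S \<subseteq> C"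
  shows "card {g \<in> P_maps P C (insert b R). g -` {b} \<inter> C = S} =
    (if card S \<in> P then card (P_maps P (C - S) R) else 0)"
proof (cases "card S \<in> P")
  case True
  let ?A = "{g \<in> P_maps P C (insert b R). g -` {b} \<inter> C = S}"
  let ?extend = "\<lambda>h x. if x \<in> S then b else h x"
  have "bij_betw (\<lambda>g. restrict g (C - S)) ?A (P_maps P (C - S) R)"
  proof (rule bij_betw_byWitness[where f' = ?extend])
    show "\<forall>g\<in>?A. ?extend (restrict g (C - S)) = g"
      using assms by (auto simp: P_maps_def PiE_def extensional_def fun_eq_iff)
    show "\<forall>h\<in>P_maps P (C - S) R. restrict (?extend h) (C - S) = h"
      by (auto simp: P_maps_def PiE_def extensional_def fun_eq_iff)
    show "(\<lambda>g. restrict g (C - S)) ` ?A \<subseteq> P_maps P (C - S) R"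
    proof (rule image_subsetI)
      fix g assume "g \<in> ?A"
      then have g: "g \<in> P_maps P C (insert b R)" "g -` {b} \<inter> C = S" by auto
      have "restrict g (C - S) -` {x} \<inter> (C - S) = g -` {x} \<inter> C" if "x \<in> R" for x
        using that assms g by auto
      with g show "restrict g (C - S) \<in> P_maps P (C - S) R"
        by (auto simp: P_maps_def PiE_def Pi_def)
    qed
    show "?extend ` P_maps P (C - S) R \<subseteq> ?A"
    proof (rule image_subsetI)
      fix h assume h: "h \<in> P_maps P (C - S) R"
      have "?extend h -` {x} \<inter> C = h -` {x} \<inter> (C - S)" if "x \<in> R" for x
        using that assms h by (auto simp: P_maps_def)
      moreover have "?extend h -` {b} \<inter> C = S"
        using assms h by (auto simp: P_maps_def PiE_def Pi_def split: if_splits)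
      ultimately show "?extend h \<in> ?A"
        using h assms True
        by (auto simp: P_maps_def PiE_def Pi_def extensional_def)
    qed
  qed
  then show ?thesis using True by (simp add: bij_betw_same_card)
next
  case False
  then have "{g \<in> P_maps P C (insert b R). g -` {b} \<inter> C = S} = {}"
    by (auto simp: P_maps_def)
  then show ?thesis using False by (metis card.empty)
qed

lemma card_P_maps:
  assumes "finite R" "finite C"
  shows "(of_nat (card (P_maps P C R)) :: 'a::field_char_0) = fact (card C) * (e_P P ^ card R) $ card C"
  using assms
proof (induction R arbitrary: C rule: finite_induct)
  case empty
  then show ?case by (simp add: P_maps_empty_target)
next
  case (insert b R)
  let ?\<phi> = "e_P P :: 'a fps"
  let ?c = "card C"
  have e_P_coeff: "(if j \<in> P then x else 0) = fact j * ?\<phi> $ j * x" for j x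
    by (simp add: e_P_def)
  have "card (P_maps P C (insert b R)) =
      (\<Sum>S\<in>Pow C. card {g \<in> P_maps P C (insert b R). g -` {b} \<inter> C = S})"
    by (rule card_eq_sum_card_fibres) (use insert in \<open>auto simp: finite_P_maps\<close>)
  also have "\<dots> = (\<Sum>S\<in>Pow C. if card S \<in> P then card (P_maps P (C - S) R) else 0)"
    using insert by (intro sum.cong) (auto simp: card_P_maps_fibre)
  finally have count: "card (P_maps P C (insert b R)) =
      (\<Sum>S\<in>Pow C. if card S \<in> P then card (P_maps P (C - S) R) else 0)" .
  have "(of_nat (card (P_maps P C (insert b R))) :: 'a) =
      (\<Sum>S\<in>Pow C. if card S \<in> P then of_nat (card (P_maps P (C - S) R)) else 0)"
    unfolding count of_nat_sum by (intro sum.cong) simp_all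
  also have "\<dots> = (\<Sum>S\<in>Pow C.
      fact (card S) * fact (?c - card S) * (?\<phi> $ card S * (?\<phi> ^ card R) $ (?c - card S)))"
    using insert by (intro sum.cong) (auto simp: e_P_coeff card_Diff_subset finite_subset ac_simps)
  also have "\<dots> = fact ?c * (?\<phi> * ?\<phi> ^ card R) $ ?c"
    using sum_Pow_fact_mult_fact[OF \<open>finite C\<close>, of "\<lambda>j. ?\<phi> $ j * (?\<phi> ^ card R) $ (?c - j)"]
    by (simp add: fps_mult_nth)
  finally show ?case using insert by simp
qed

section \<open>Forests with child counts in \<open>P\<close>\<close>

inductive reaches :: "('a \<Rightarrow> 'a) \<Rightarrow> 'a set \<Rightarrow> 'a \<Rightarrow> bool" for p R where
  base: "x \<in> R \<Longrightarrow> reaches p R x"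
| step: "reaches p R (p x) \<Longrightarrow> reaches p R x"

lemma reaches_iff_funpow: "reaches p R x \<longleftrightarrow> (\<exists>k. (p ^^ k) x \<in> R)"
proof
  assume "reaches p R x"
  then show "\<exists>k. (p ^^ k) x \<in> R"
  proof induction
    case (base x)
    then show ?case by (metis funpow_0)
  next
    case (step x)
    then obtain k where "(p ^^ k) (p x) \<in> R" by blast
    then have "(p ^^ Suc k) x \<in> R" by (simp add: funpow_Suc_right del: funpow.simps)
    then show ?case by blast
  qed
next
  assume "\<exists>k. (p ^^ k) x \<in> R"
  then obtain k where "(p ^^ k) x \<in> R" by blast
  then show "reaches p R x"
  proof (induction k arbitrary: x)
    case 0
    then show ?case by (simp add: reaches.base)
  next
    case (Suc k)
    then have "(p ^^ k) (p x) \<in> R" by (simp add: funpow_Suc_right del: funpow.simps)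
    then show ?case using Suc.IH by (blast intro: reaches.step)
  qed
qed

lemma reaches_fixed_point: "reaches p R x \<Longrightarrow> p x = x \<Longrightarrow> x \<in> R"
  by (induction rule: reaches.induct) auto

lemma not_reaches_empty: "\<not> reaches p {} x"
proof
  assume "reaches p {} x"
  then show False by induction auto
qed

definition children_in :: "'a set \<Rightarrow> ('a \<Rightarrow> 'a) \<Rightarrow> 'a \<Rightarrow> 'a set" where
  "children_in W p x = {y \<in> W. y \<noteq> x \<and> p y = x}"

text \<open>As in \<open>rooted_tree\<close>, a forest is given by its parent map, which fixes the roots;
  by \<open>reaches_fixed_point\<close> the roots are exactly the vertices of \<open>R\<close>.\<close>

definition P_forests :: "nat set \<Rightarrow> 'a set \<Rightarrow> 'a set \<Rightarrow> ('a \<Rightarrow> 'a) set" where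
  "P_forests P W R = {p \<in> W \<rightarrow>\<^sub>E W. (\<forall>r\<in>R. p r = r) \<and> (\<forall>x\<in>W. reaches p R x) \<and>
     (\<forall>x\<in>W. card (children_in W p x) \<in> P)}"

lemma finite_P_forests: "finite W \<Longrightarrow> finite (P_forests P W R)"
  unfolding P_forests_def by (rule finite_subset[of _ "W \<rightarrow>\<^sub>E W"]) (auto intro: finite_PiE)

lemma card_P_forests_no_roots: "card (P_forests P W {}) = (if W = {} then 1 else 0)"
proof (cases "W = {}")
  case True
  then have "P_forests P W {} = {\<lambda>_. undefined}" by (auto simp: P_forests_def)
  then show ?thesis using True by simp
next
  case False
  then have "P_forests P W {} = {}" by (auto simp: P_forests_def not_reaches_empty)
  then show ?thesis using False by simp
qed

definition first_level :: "'a set \<Rightarrow> 'a set \<Rightarrow> ('a \<Rightarrow> 'a) \<Rightarrow> 'a set" where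
  "first_level W R p = {y \<in> W - R. p y \<in> R}"

text \<open>Deleting the roots \<open>R\<close> turns the first level \<open>C\<close> into the new roots; \<open>graft\<close> undoes
  this, given the parents \<open>g\<close> of the vertices in \<open>C\<close>.\<close>

definition prune :: "'a set \<Rightarrow> 'a set \<Rightarrow> 'a set \<Rightarrow> ('a \<Rightarrow> 'a) \<Rightarrow> 'a \<Rightarrow> 'a" where
  "prune W R C p = (\<lambda>x. if x \<in> W - R then if x \<in> C then x else p x else undefined)"

definition graft :: "'a set \<Rightarrow> 'a set \<Rightarrow> ('a \<Rightarrow> 'a) \<Rightarrow> ('a \<Rightarrow> 'a) \<Rightarrow> 'a \<Rightarrow> 'a" where
  "graft R C g q = (\<lambda>x. if x \<in> R then x else if x \<in> C then g x else q x)"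

lemma reaches_prune:
  assumes "reaches p R x" "x \<in> W - R" "p \<in> W \<rightarrow> W"
  shows "reaches (prune W R (first_level W R p) p) (first_level W R p) x"
  using assms
proof (induction rule: reaches.induct)
  case (base x)
  then show ?case by simp
next
  case (step x)
  show ?case
  proof (cases "p x \<in> R")
    case True
    then show ?thesis using step.prems by (simp add: first_level_def reaches.base)
  next
    case False
    then have "prune W R (first_level W R p) p x = p x" "p x \<in> W - R"
      using step.prems by (auto simp: prune_def first_level_def)
    then show ?thesis using step.IH step.prems(2) by (metis reaches.step)
  qed
qed

lemma reaches_graft:
  assumes "reaches q C x" "x \<in> W - R" "q \<in> (W - R) \<rightarrow> (W - R)" "g \<in> C \<rightarrow> R"
  shows "reaches (graft R C g q) R x"
  using assms
proof (induction rule: reaches.induct)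
  case (base x)
  then have "graft R C g q x \<in> R" by (auto simp: graft_def)
  then show ?case by (blast intro: reaches.base reaches.step)
next
  case (step x)
  show ?case
  proof (cases "x \<in> C")
    case True
    then have "graft R C g q x \<in> R" using step.prems by (auto simp: graft_def)
    then show ?thesis by (blast intro: reaches.base reaches.step)
  next
    case False
    then have "graft R C g q x = q x" "q x \<in> W - R" using step.prems by (auto simp: graft_def)
    then show ?thesis using step.IH step.prems by (metis reaches.step)
  qed
qed

lemma children_in_root:
  assumes "p \<in> W \<rightarrow>\<^sub>E W" "\<forall>r\<in>R. p r = r" "r \<in> R" "R \<subseteq> W"
  shows "children_in W p r = restrict p (first_level W R p) -` {r} \<inter> first_level W R p"
  using assms by (auto simp: children_in_def first_level_def)

lemma children_in_prune:
  assumes "p \<in> W \<rightarrow>\<^sub>E W" "\<forall>r\<in>R. p r = r" "x \<in> W - R"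
  shows "children_in (W - R) (prune W R (first_level W R p) p) x = children_in W p x"
  using assms by (auto simp: children_in_def first_level_def prune_def)

lemma restrict_first_level_in_P_maps:
  assumes "p \<in> P_forests P W R" "R \<subseteq> W"
  shows "restrict p (first_level W R p) \<in> P_maps P (first_level W R p) R"
proof -
  have "card (restrict p (first_level W R p) -` {r} \<inter> first_level W R p) \<in> P" if r: "r \<in> R" for r
  proof -
    have "card (children_in W p r) \<in> P" using assms r by (auto simp: P_forests_def)
    then show ?thesis using assms r children_in_root[of p W R r] by (simp add: P_forests_def)
  qed
  then show ?thesis by (auto simp: P_maps_def first_level_def)
qed

lemma prune_in_P_forests:
  assumes "p \<in> P_forests P W R" "R \<subseteq> W"
  shows "prune W R (first_level W R p) p \<in> P_forests P (W - R) (first_level W R p)"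
proof -
  have p: "p \<in> W \<rightarrow>\<^sub>E W" "\<forall>r\<in>R. p r = r" "\<forall>x\<in>W. reaches p R x"
    "\<forall>x\<in>W. card (children_in W p x) \<in> P"
    using assms(1) by (auto simp: P_forests_def)
  have "prune W R (first_level W R p) p \<in> (W - R) \<rightarrow>\<^sub>E (W - R)"
    using p by (auto simp: prune_def first_level_def PiE_def Pi_def extensional_def)
  moreover have "\<forall>c\<in>first_level W R p. prune W R (first_level W R p) p c = c"
    by (auto simp: prune_def first_level_def)
  moreover have "\<forall>x\<in>W - R. reaches (prune W R (first_level W R p) p) (first_level W R p) x"
    using p by (auto intro: reaches_prune)
  moreover have "\<forall>x\<in>W - R. card (children_in (W - R) (prune W R (first_level W R p) p) x) \<in> P"
    using p by (simp add: children_in_prune)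
  ultimately show ?thesis by (simp add: P_forests_def)
qed

lemma
  assumes "g \<in> C \<rightarrow>\<^sub>E R" "q \<in> (W - R) \<rightarrow>\<^sub>E (W - R)" "\<forall>c\<in>C. q c = c" "C \<subseteq> W - R"
  shows first_level_graft: "first_level W R (graft R C g q) = C"
    and restrict_graft: "restrict (graft R C g q) C = g"
    and prune_graft: "prune W R C (graft R C g q) = q"
  using assms by (auto simp: first_level_def graft_def prune_def PiE_def Pi_def extensional_def fun_eq_iff)

lemma graft_restrict_prune:
  assumes "p \<in> W \<rightarrow>\<^sub>E W" "\<forall>r\<in>R. p r = r"
  shows "graft R C (restrict p C) (prune W R C p) = p"
  using assms by (auto simp: graft_def prune_def PiE_def extensional_def fun_eq_iff)

lemma graft_in_P_forests:
  assumes g: "g \<in> P_maps P C R" and q: "q \<in> P_forests P (W - R) C" and "R \<subseteq> W" "C \<subseteq> W - R"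
  shows "graft R C g q \<in> P_forests P W R"
proof -
  let ?p = "graft R C g q"
  have g': "g \<in> C \<rightarrow>\<^sub>E R" "\<forall>r\<in>R. card (g -` {r} \<inter> C) \<in> P"
    using g by (auto simp: P_maps_def)
  have q': "q \<in> (W - R) \<rightarrow>\<^sub>E (W - R)" "\<forall>c\<in>C. q c = c" "\<forall>x\<in>W - R. reaches q C x"
    "\<forall>x\<in>W - R. card (children_in (W - R) q x) \<in> P"
    using q by (auto simp: P_forests_def)
  have p: "?p \<in> W \<rightarrow>\<^sub>E W" "\<forall>r\<in>R. ?p r = r"
    using g' q' assms(3,4) by (auto simp: graft_def PiE_def Pi_def extensional_def)
  note graft_eqs = first_level_graft[OF g'(1) q'(1,2) assms(4)] restrict_graft[OF g'(1) q'(1,2) assms(4)]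
    prune_graft[OF g'(1) q'(1,2) assms(4)]
  have "reaches ?p R x" if "x \<in> W" for x
    using that q' g' by (cases "x \<in> R") (auto intro: reaches.base reaches_graft simp: PiE_def)
  moreover have "card (children_in W ?p x) \<in> P" if "x \<in> W" for x
  proof (cases "x \<in> R")
    case True
    then show ?thesis using children_in_root[OF p True assms(3)] graft_eqs g' by simp
  next
    case False
    then have "children_in W ?p x = children_in (W - R) q x"
      using children_in_prune[OF p, of x] graft_eqs that by simp
    then show ?thesis using q'(4) that False by simp
  qed
  ultimately show ?thesis using p by (simp add: P_forests_def)
qed

lemma card_P_forests_first_level:
  assumes "R \<subseteq> W" "C \<subseteq> W - R"
  shows "card {p \<in> P_forests P W R. first_level W R p = C} = card (P_maps P C R) * card (P_forests P (W - R) C)"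
proof -
  let ?A = "{p \<in> P_forests P W R. first_level W R p = C}"
  have "bij_betw (\<lambda>p. (restrict p C, prune W R C p)) ?A (P_maps P C R \<times> P_forests P (W - R) C)"
  proof (rule bij_betw_byWitness[where f' = "\<lambda>(g, q). graft R C g q"])
    show "\<forall>p\<in>?A. (\<lambda>(g, q). graft R C g q) (restrict p C, prune W R C p) = p"
      by (auto simp: P_forests_def graft_restrict_prune)
    show "\<forall>gq\<in>P_maps P C R \<times> P_forests P (W - R) C.
        (\<lambda>p. (restrict p C, prune W R C p)) ((\<lambda>(g, q). graft R C g q) gq) = gq"
      using assms by (auto simp: P_maps_def P_forests_def restrict_graft prune_graft)
    show "(\<lambda>p. (restrict p C, prune W R C p)) ` ?A \<subseteq> P_maps P C R \<times> P_forests P (W - R) C"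
      using assms by (auto intro: restrict_first_level_in_P_maps prune_in_P_forests)
    show "(\<lambda>(g, q). graft R C g q) ` (P_maps P C R \<times> P_forests P (W - R) C) \<subseteq> ?A"
    proof (rule image_subsetI)
      fix gq assume "gq \<in> P_maps P C R \<times> P_forests P (W - R) C"
      then obtain g q where gq: "gq = (g, q)" and g: "g \<in> P_maps P C R"
        and q: "q \<in> P_forests P (W - R) C" by blast
      then have "first_level W R (graft R C g q) = C"
        using assms by (intro first_level_graft) (auto simp: P_maps_def P_forests_def)
      then show "(\<lambda>(g, q). graft R C g q) gq \<in> ?A"
        using graft_in_P_forests[OF g q assms] gq by simp
    qed
  qed
  then show ?thesis by (simp add: bij_betw_same_card card_cartesian_product)
qed

lemma card_P_forests_eq_sum:
  assumes "finite W" "R \<subseteq> W"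
  shows "card (P_forests P W R) =
    (\<Sum>C\<in>Pow (W - R). card (P_maps P C R) * card (P_forests P (W - R) C))"
proof -
  have "card (P_forests P W R) = (\<Sum>C\<in>Pow (W - R). card {p \<in> P_forests P W R. first_level W R p = C})"
    by (rule card_eq_sum_card_fibres) (use assms in \<open>auto simp: finite_P_forests first_level_def\<close>)
  also have "\<dots> = (\<Sum>C\<in>Pow (W - R). card (P_maps P C R) * card (P_forests P (W - R) C))"
    using assms by (intro sum.cong) (auto simp: card_P_forests_first_level)
  finally show ?thesis .
qed

lemma functional_eq_power_nth:
  fixes \<phi> T :: "'a::idom fps"
  assumes T: "T = fps_X * (\<phi> oo T)"
  shows "(T ^ k) $ (d + k) = (\<Sum>j=0..d. (\<phi> ^ k) $ j * (T ^ j) $ d)"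
proof -
  have T0: "T $ 0 = 0" by (subst T) simp
  have "T ^ k = (fps_X * (\<phi> oo T)) ^ k" using T by (rule arg_cong)
  also have "\<dots> = fps_X ^ k * (\<phi> ^ k oo T)"
    using T0 by (simp add: power_mult_distrib fps_compose_power)
  finally show ?thesis by (simp add: fps_X_power_mult_nth fps_compose_nth)
qed

lemma card_P_forests:
  fixes T :: "'a::field_char_0 fps"
  assumes T: "T = fps_X * (e_P P oo T)" and "finite W" "R \<subseteq> W"
  shows "of_nat (card (P_forests P W R)) = fact (card W - card R) * (T ^ card R) $ card W"
  using assms(2,3)
proof (induction "card W" arbitrary: W R rule: less_induct)
  case less
  show ?case
  proof (cases "R = {}")
    case True
    then show ?thesis using less.prems by (simp add: card_P_forests_no_roots)
  next
    case False
    let ?\<phi> = "e_P P :: 'a fps"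
    let ?k = "card R" and ?d = "card (W - R)"
    have "finite R" using less.prems finite_subset by blast
    then have "0 < ?k" "?d = card W - ?k" "?k \<le> card W"
      using less.prems False by (auto simp: card_gt_0_iff card_Diff_subset card_mono)
    then have W: "card W = ?d + ?k" and smaller: "?d < card W" by linarith+
    have "(of_nat (card (P_forests P W R)) :: 'a) =
        (\<Sum>C\<in>Pow (W - R). of_nat (card (P_maps P C R)) * of_nat (card (P_forests P (W - R) C)))"
      using less.prems by (simp add: card_P_forests_eq_sum)
    also have "\<dots> = (\<Sum>C\<in>Pow (W - R).
        fact (card C) * fact (?d - card C) * ((?\<phi> ^ ?k) $ card C * (T ^ card C) $ ?d))"
    proof (rule sum.cong[OF refl])
      fix C assume "C \<in> Pow (W - R)"
      then have "C \<subseteq> W - R" by simp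
      then have "finite C" using less.prems by (meson finite_Diff finite_subset)
      then show "(of_nat (card (P_maps P C R)) :: 'a) * of_nat (card (P_forests P (W - R) C)) =
          fact (card C) * fact (?d - card C) * ((?\<phi> ^ ?k) $ card C * (T ^ card C) $ ?d)"
        using card_P_maps[OF \<open>finite R\<close>, of C P, where 'a = 'a] less.hyps[OF smaller, of C]
          less.prems \<open>C \<subseteq> W - R\<close>
        by (simp add: ac_simps)
    qed
    also have "\<dots> = fact ?d * (\<Sum>j=0..?d. (?\<phi> ^ ?k) $ j * (T ^ j) $ ?d)"
      using less.prems by (simp add: sum_Pow_fact_mult_fact[where f = "\<lambda>j. (?\<phi> ^ ?k) $ j * (T ^ j) $ ?d"])
    also have "\<dots> = fact ?d * (T ^ ?k) $ (?d + ?k)"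
      by (simp add: functional_eq_power_nth[OF T])
    finally show ?thesis using W by simp
  qed
qed

section \<open>The generating functions \<open>T\<^sup>P\<close> and \<open>F\<^sup>P\<close>\<close>

lemma P_trees_eq_Union: "P_trees P n = (\<Union>r\<in>{1..n}. P_forests P {1..n} {r})"
  unfolding P_trees_def rooted_tree_def P_forests_def children_def children_in_def
  by (auto simp: reaches_iff_funpow)

lemma card_P_trees: "card (P_trees P n) = (\<Sum>r\<in>{1..n}. card (P_forests P {1..n} {r}))"
  unfolding P_trees_eq_Union
proof (rule card_UN_disjoint)
  show "\<forall>r\<in>{1..n}. \<forall>s\<in>{1..n}. r \<noteq> s \<longrightarrow> P_forests P {1..n} {r} \<inter> P_forests P {1..n} {s} = {}"
    by (auto simp: P_forests_def dest: reaches_fixed_point)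
qed (simp_all add: finite_P_forests)

lemma T_P_eqI:
  assumes T: "T = fps_X * (e_P P oo T)"
  shows "T_P P = T"
proof (rule fps_ext)
  fix n
  show "T_P P $ n = T $ n"
  proof (cases n)
    case 0
    then show ?thesis by (subst T) (simp add: T_P_def card_P_trees)
  next
    case (Suc m)
    have "(of_nat (card (P_trees P n)) :: 'a) = (\<Sum>r\<in>{1..n}. fact m * T $ n)"
      unfolding card_P_trees of_nat_sum
      by (intro sum.cong) (simp_all add: card_P_forests[OF T] Suc)
    also have "\<dots> = fact n * T $ n" by (simp add: Suc)
    finally show ?thesis by (simp add: T_P_def)
  qed
qed

lemma F_P_nth: "(F_P P :: 'a::field_char_0 fps) $ n = (e_P P ^ n) $ n"
proof -
  have "P_functions P n = P_maps P {1..n} {1..n}" by (simp add: P_functions_def P_maps_def)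
  then show ?thesis using card_P_maps[of "{1..n}" "{1..n}" P, where 'a = 'a] by (simp add: F_P_def)
qed

theorem corollary5p6:
  fixes P :: "nat set"
  assumes "0 \<in> P"
  shows "(F_P P :: 'a::field_char_0 fps) = fps_X * fps_deriv (T_P P) / T_P P
     \<and> (\<forall>n. fps_nth (F_P P :: 'a fps) n = fps_nth ((e_P P :: 'a fps) ^ n) n)"
proof -
  have \<phi>0: "(e_P P :: 'a fps) $ 0 \<noteq> 0" using assms by (simp add: e_P_def)
  obtain T :: "'a fps" where T: "T = fps_X * (e_P P oo T)"
    using fps_inv_X_mult_inverse_functional_eq[OF \<phi>0] by blast
  have "(F_P P :: 'a fps) = fps_X * fps_deriv T / T"
    by (rule fps_ext) (simp add: F_P_nth lagrange_inversion_log_deriv[OF \<phi>0 T])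
  then show ?thesis unfolding T_P_eqI[OF T] using F_P_nth by blast
qed

end
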